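(* Let $\sigma(x,y)=(x\rightharpoonup y,x\leftharpoonup y)$ be a left-non-degenerate involutive quiver-theoretic Yang--Baxter map on a quiver $\mathscr{A}$ over $\Lambda$. For $x,y\in\mathscr{A}$ with $\mathfrak{s}(x)=\mathfrak{s}(y)$ set $x\star y:=(x\rightharpoonup\cdot)^{-1}(y)$. Then $(\mathscr{A},\star)$ is a left-non-degenerate weak RC-system, and $x\star y$ is defined whenever $\mathfrak{s}(x)=\mathfrak{s}(y)$.
   Context: A quiver over $\Lambda$ has source/target maps $\mathfrak{s},\mathfrak{t}$; $Q(\lambda,\Lambda)$ denotes arrows with source $\lambda$, $Q(\Lambda,\mu)$ arrows with target $\mu$. A quiver-theoretic Yang--Baxter map is a source/target-preserving map $\sigma$ on composable pairs $\mathscr{A}\otimes\mathscr{A}$ satisfying $(\sigma\otimes\mathrm{id})(\mathrm{id}\otimes\sigma)(\sigma\otimes\mathrm{id})=(\mathrm{id}\otimes\sigma)(\sigma\otimes\mathrm{id})(\mathrm{id}\otimes\sigma)$; involutive: $\sigma^2=\mathrm{id}$; left-non-degenerate: each $x\rightharpoonup\cdot\colon\mathscr{A}(\mathfrak{t}(x),\Lambda)\to\mathscr{A}(\mathfrak{s}(x),\Lambda)$ is bijective. A weak RC-system $(Q,\star)$ is a quiver $Q$ with a partially defined binary operation $\star$ such that: $x\star y$ is defined only if $\mathfrak{s}(x)=\mathfrak{s}(y)$; whenever $x\star y$ is defined, $y\star x$ is defined, $\mathfrak{s}(x\star y)=\mathfrak{t}(x)$, $\mathfrak{s}(y\star x)=\mathfrak{t}(y)$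 and $\mathfrak{t}(x\star y)=\mathfrak{t}(y\star x)$; and whenever $x\star y$, $x\star z$, $(x\star y)\star(x\star z)$ are defined, then $y\star z$ and $(y\star x)\star(y\star z)$ are defined and $(x\star y)\star(x\star z)=(y\star x)\star(y\star z)$ (RC-law). It is left-non-degenerate if every map $x\star\cdot\colon Q(\mathfrak{s}(x),\Lambda)\to Q(\mathfrak{t}(x),\Lambda)$ is a bijection. *)

theory Defs
  imports Main
begin

definition quiver :: "'v set \<Rightarrow> 'a set \<Rightarrow> ('a \<Rightarrow> 'v) \<Rightarrow> ('a \<Rightarrow> 'v) \<Rightarrow> bool" where
  "quiver Lam A s t \<longleftrightarrow> (\<forall>x\<in>A. s x \<in> Lam \<and> t x \<in> Lam)"

definition composable :: "'a set \<Rightarrow> ('a \<Rightarrow> 'v) \<Rightarrow> ('a \<Rightarrow> 'v) \<Rightarrow> ('a \<times> 'a) set" where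
  "composable A s t = {(x, y). x \<in> A \<and> y \<in> A \<and> t x = s y}"

definition sig12 :: "('a \<times> 'a \<Rightarrow> 'a \<times> 'a) \<Rightarrow> 'a \<times> 'a \<times> 'a \<Rightarrow> 'a \<times> 'a \<times> 'a" where
  "sig12 \<sigma> p = (case p of (x, y, z) \<Rightarrow> (fst (\<sigma> (x, y)), snd (\<sigma> (x, y)), z))"

definition sig23 :: "('a \<times> 'a \<Rightarrow> 'a \<times> 'a) \<Rightarrow> 'a \<times> 'a \<times> 'a \<Rightarrow> 'a \<times> 'a \<times> 'a" where
  "sig23 \<sigma> p = (case p of (x, y, z) \<Rightarrow> (x, fst (\<sigma> (y, z)), snd (\<sigma> (y, z))))"

text \<open>Writing \<sigma>(x,y) = (x \<rightharpoonup> y, x \<leftharpoonup> y),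
  the first component is fst (\<sigma> (x,y)).\<close>
definition quiver_YB_map ::
  "'v set \<Rightarrow> 'a set \<Rightarrow> ('a \<Rightarrow> 'v) \<Rightarrow> ('a \<Rightarrow> 'v) \<Rightarrow> ('a \<times> 'a \<Rightarrow> 'a \<times> 'a) \<Rightarrow> bool" where
  "quiver_YB_map Lam A s t \<sigma> \<longleftrightarrow>
     quiver Lam A s t \<and>
     (\<forall>x y. (x, y) \<in> composable A s t \<longrightarrow>
        \<sigma> (x, y) \<in> composable A s t \<and>
        s (fst (\<sigma> (x, y))) = s x \<and> t (snd (\<sigma> (x, y))) = t y) \<and>
     (\<forall>x y z. x \<in> A \<and> y \<in> A \<and> z \<in> A \<and> t x = s y \<and> t y = s z \<longrightarrow>
        sig12 \<sigma> (sig23 \<sigma> (sig12 \<sigma> (x, y, z))) = sig23 \<sigma> (sig12 \<sigma> (sig23 \<sigma> (x, y, z))))"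

definition involutive_YB :: "'a set \<Rightarrow> ('a \<Rightarrow> 'v) \<Rightarrow> ('a \<Rightarrow> 'v) \<Rightarrow> ('a \<times> 'a \<Rightarrow> 'a \<times> 'a) \<Rightarrow> bool" where
  "involutive_YB A s t \<sigma> \<longleftrightarrow> (\<forall>p \<in> composable A s t. \<sigma> (\<sigma> p) = p)"

definition left_nondeg_YB :: "'a set \<Rightarrow> ('a \<Rightarrow> 'v) \<Rightarrow> ('a \<Rightarrow> 'v) \<Rightarrow> ('a \<times> 'a \<Rightarrow> 'a \<times> 'a) \<Rightarrow> bool" where
  "left_nondeg_YB A s t \<sigma> \<longleftrightarrow>
     (\<forall>x\<in>A. bij_betw (\<lambda>y. fst (\<sigma> (x, y))) {y \<in> A. s y = t x} {y \<in> A. s y = s x})"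

definition star_of ::
  "'a set \<Rightarrow> ('a \<Rightarrow> 'v) \<Rightarrow> ('a \<Rightarrow> 'v) \<Rightarrow> ('a \<times> 'a \<Rightarrow> 'a \<times> 'a) \<Rightarrow> 'a \<Rightarrow> 'a \<Rightarrow> 'a option" where
  "star_of A s t \<sigma> x y =
     (if x \<in> A \<and> y \<in> A \<and> s x = s y
      then Some (inv_into {z \<in> A. s z = t x} (\<lambda>z. fst (\<sigma> (x, z))) y)
      else None)"

definition weak_RC_system ::
  "'v set \<Rightarrow> 'a set \<Rightarrow> ('a \<Rightarrow> 'v) \<Rightarrow> ('a \<Rightarrow> 'v) \<Rightarrow> ('a \<Rightarrow> 'a \<Rightarrow> 'a option) \<Rightarrow> bool" where
  "weak_RC_system Lam A s t op \<longleftrightarrow>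
     quiver Lam A s t \<and>
     (\<forall>x y u. op x y = Some u \<longrightarrow> x \<in> A \<and> y \<in> A \<and> u \<in> A \<and> s x = s y) \<and>
     (\<forall>x y u. op x y = Some u \<longrightarrow>
        (\<exists>v. op y x = Some v \<and> s u = t x \<and> s v = t y \<and> t u = t v)) \<and>
     (\<forall>x y z u w r. op x y = Some u \<and> op x z = Some w \<and> op u w = Some r \<longrightarrow>
        (\<exists>p q. op y z = Some q \<and> op y x = Some p \<and> op p q = Some r))"

definition left_nondeg_RC ::
  "'a set \<Rightarrow> ('a \<Rightarrow> 'v) \<Rightarrow> ('a \<Rightarrow> 'v) \<Rightarrow> ('a \<Rightarrow> 'a \<Rightarrow> 'a option) \<Rightarrow> bool" where
  "left_nondeg_RC A s t op \<longleftrightarrow>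
     (\<forall>x\<in>A. (\<forall>y \<in> {y \<in> A. s y = s x}. op x y \<noteq> None) \<and>
        bij_betw (\<lambda>y. the (op x y)) {y \<in> A. s y = s x} {z \<in> A. s z = t x})"

end

theory Submission
  imports Defs
begin

text \<open>Write \<open>\<sigma>(x, y) = (x \<rightharpoonup> y, x \<leftharpoonup> y)\<close>, so that \<open>x \<star> y\<close> is the unique \<open>u\<close> with
  \<open>x \<rightharpoonup> u = y\<close>.  Involutivity sends \<open>(y, x \<leftharpoonup> (x \<star> y)) = \<sigma>(x, x \<star> y)\<close> back to
  \<open>(x, x \<star> y)\<close>, hence \<open>y \<star> x = x \<leftharpoonup> (x \<star> y)\<close>; as \<open>\<sigma>\<close> preserves targets, \<open>x \<star> y\<close> and
  \<open>y \<star> x\<close> have the same target.  For the RC-law put \<open>u = x \<star> y\<close> and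
  \<open>r = u \<star> (x \<star> z)\<close>: comparing first components of the braid relation on \<open>(x, u, r)\<close>
  gives \<open>y \<rightharpoonup> ((y \<star> x) \<rightharpoonup> r) = x \<rightharpoonup> (u \<rightharpoonup> r) = z\<close>, i.e. \<open>(y \<star> x) \<star> (y \<star> z) = r\<close>.\<close>

locale left_nondeg_quiver_map =
  fixes A :: "'a set" and s t :: "'a \<Rightarrow> 'v" and \<sigma> :: "'a \<times> 'a \<Rightarrow> 'a \<times> 'a"
  assumes left_nondeg: "left_nondeg_YB A s t \<sigma>"
begin

abbreviation left_action :: "'a \<Rightarrow> 'a \<Rightarrow> 'a" (infixr \<open>\<rightharpoonup>\<close> 65)
  where "x \<rightharpoonup> y \<equiv> fst (\<sigma> (x, y))"

definition star :: "'a \<Rightarrow> 'a \<Rightarrow> 'a" (infixl \<open>\<star>\<close> 70)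
  where "x \<star> y = inv_into {z \<in> A. s z = t x} (\<lambda>z. x \<rightharpoonup> z) y"

lemma star_of_eq:
  "star_of A s t \<sigma> x y = (if x \<in> A \<and> y \<in> A \<and> s x = s y then Some (x \<star> y) else None)"
  by (simp add: star_of_def star_def)

lemma bij_left_action:
  "x \<in> A \<Longrightarrow> bij_betw (\<lambda>z. x \<rightharpoonup> z) {z \<in> A. s z = t x} {y \<in> A. s y = s x}"
  using left_nondeg unfolding left_nondeg_YB_def by blast

lemma bij_star:
  "x \<in> A \<Longrightarrow> bij_betw (\<lambda>y. x \<star> y) {y \<in> A. s y = s x} {z \<in> A. s z = t x}"
  unfolding star_def by (rule bij_betw_inv_into[OF bij_left_action])

lemma star_mem:
  assumes "x \<in> A" "y \<in> A" "s y = s x"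
  shows "x \<star> y \<in> A" and "s (x \<star> y) = t x"
  using bij_betwE[OF bij_star[OF assms(1)]] assms(2,3) by auto

lemma left_action_star:
  assumes "x \<in> A" "y \<in> A" "s y = s x"
  shows "x \<rightharpoonup> (x \<star> y) = y"
  unfolding star_def
  by (rule f_inv_into_f) (use bij_betw_imp_surj_on[OF bij_left_action[OF assms(1)]] assms in auto)

lemma star_left_action:
  assumes "x \<in> A" "z \<in> A" "s z = t x"
  shows "x \<star> (x \<rightharpoonup> z) = z"
  unfolding star_def
  by (rule inv_into_f_f) (use bij_betw_imp_inj_on[OF bij_left_action[OF assms(1)]] assms in auto)

lemma left_nondeg_RC_star_of: "left_nondeg_RC A s t (star_of A s t \<sigma>)"
  unfolding left_nondeg_RC_def
proof (intro ballI conjI)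
  fix x assume "x \<in> A"
  have "bij_betw (\<lambda>y. x \<star> y) {y \<in> A. s y = s x} {z \<in> A. s z = t x}"
    using \<open>x \<in> A\<close> by (rule bij_star)
  then show "bij_betw (\<lambda>y. the (star_of A s t \<sigma> x y)) {y \<in> A. s y = s x} {z \<in> A. s z = t x}"
    by (rule bij_betw_cong[THEN iffD1, rotated]) (simp add: star_of_eq \<open>x \<in> A\<close>)
qed (simp add: star_of_eq)

end

locale involutive_left_nondeg_quiver_YB = left_nondeg_quiver_map A s t \<sigma>
  for Lam :: "'v set" and A :: "'a set" and s t :: "'a \<Rightarrow> 'v" and \<sigma> :: "'a \<times> 'a \<Rightarrow> 'a \<times> 'a" +
  assumes YB: "quiver_YB_map Lam A s t \<sigma>"
    and involutive: "involutive_YB A s t \<sigma>"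
begin

abbreviation right_action :: "'a \<Rightarrow> 'a \<Rightarrow> 'a" (infixl \<open>\<leftharpoonup>\<close> 65)
  where "x \<leftharpoonup> y \<equiv> snd (\<sigma> (x, y))"

lemma sigma_composable:
  assumes "x \<in> A" "y \<in> A" "t x = s y"
  shows "x \<rightharpoonup> y \<in> A" and "x \<leftharpoonup> y \<in> A" and "t (x \<rightharpoonup> y) = s (x \<leftharpoonup> y)"
    and "s (x \<rightharpoonup> y) = s x" and "t (x \<leftharpoonup> y) = t y"
  using YB assms unfolding quiver_YB_map_def composable_def by (auto simp: case_prod_beta)

lemma sigma_sigma:
  assumes "x \<in> A" "y \<in> A" "t x = s y"
  shows "\<sigma> (x \<rightharpoonup> y, x \<leftharpoonup> y) = (x, y)"
  using involutive assms unfolding involutive_YB_def composable_def by simp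

lemma left_action_braid:
  assumes "x \<in> A" "y \<in> A" "z \<in> A" "t x = s y" "t y = s z"
  shows "(x \<rightharpoonup> y) \<rightharpoonup> ((x \<leftharpoonup> y) \<rightharpoonup> z) = x \<rightharpoonup> (y \<rightharpoonup> z)"
proof -
  have "sig12 \<sigma> (sig23 \<sigma> (sig12 \<sigma> (x, y, z))) = sig23 \<sigma> (sig12 \<sigma> (sig23 \<sigma> (x, y, z)))"
    using YB assms unfolding quiver_YB_map_def by blast
  then show ?thesis
    by (simp add: sig12_def sig23_def case_prod_beta)
qed

lemma star_swap:
  assumes "x \<in> A" "y \<in> A" "s y = s x"
  shows "y \<star> x = x \<leftharpoonup> (x \<star> y)"
proof -
  let ?u = "x \<star> y"
  have u: "?u \<in> A" "t x = s ?u" and xu: "x \<rightharpoonup> ?u = y"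
    using star_mem[OF assms] left_action_star[OF assms] by auto
  have "y \<rightharpoonup> (x \<leftharpoonup> ?u) = x"
    using sigma_sigma[OF assms(1) u] xu by simp
  moreover have "x \<leftharpoonup> ?u \<in> A" "s (x \<leftharpoonup> ?u) = t y"
    using sigma_composable[OF assms(1) u] xu by auto
  ultimately show ?thesis
    using star_left_action[OF assms(2)] by metis
qed

lemma target_star_swap:
  assumes "x \<in> A" "y \<in> A" "s y = s x"
  shows "t (y \<star> x) = t (x \<star> y)"
  using star_swap[OF assms] sigma_composable(5)[OF assms(1) star_mem(1)[OF assms]]
    star_mem(2)[OF assms] by simp

lemma star_RC_law:
  assumes "x \<in> A" "y \<in> A" "z \<in> A" "s y = s x" "s z = s x"
  shows "(y \<star> x) \<star> (y \<star> z) = (x \<star> y) \<star> (x \<star> z)"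
proof -
  define u where "u = x \<star> y"
  define r where "r = u \<star> (x \<star> z)"
  define p where "p = y \<star> x"
  have u: "u \<in> A" "t x = s u" "x \<rightharpoonup> u = y"
    unfolding u_def using star_mem[OF assms(1,2,4)] left_action_star[OF assms(1,2,4)] by auto
  have xz: "x \<star> z \<in> A" "s (x \<star> z) = s u" "x \<rightharpoonup> (x \<star> z) = z"
    using star_mem[OF assms(1,3,5)] left_action_star[OF assms(1,3,5)] u(2) by auto
  have r: "r \<in> A" "t u = s r" "u \<rightharpoonup> r = x \<star> z"
    unfolding r_def using star_mem[OF u(1) xz(1,2)] left_action_star[OF u(1) xz(1,2)] by auto
  have p: "p = x \<leftharpoonup> u" "p \<in> A" "s p = t y" "t p = t u"
    unfolding p_def u_def using star_swap[OF assms(1,2,4)] star_mem[OF assms(2,1)] assms(4)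
      target_star_swap[OF assms(1,2,4)] by auto
  have "y \<rightharpoonup> (p \<rightharpoonup> r) = z"
    using left_action_braid[OF assms(1) u(1) r(1) u(2) r(2)] u(3) r(3) xz(3) p(1) by simp
  moreover have "p \<rightharpoonup> r \<in> A" "s (p \<rightharpoonup> r) = t y"
    using sigma_composable[OF p(2) r(1)] p(3,4) r(2) by auto
  ultimately have "y \<star> z = p \<rightharpoonup> r"
    using star_left_action[OF assms(2)] by metis
  then have "p \<star> (y \<star> z) = r"
    using star_left_action[OF p(2) r(1)] p(4) r(2) by simp
  then show ?thesis
    unfolding p_def r_def u_def .
qed

lemma weak_RC_system_star_of: "weak_RC_system Lam A s t (star_of A s t \<sigma>)"
  unfolding weak_RC_system_def
proof (intro conjI; (intro allI impI)?)
  show "quiver Lam A s t"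
    using YB unfolding quiver_YB_map_def by blast
next
  fix x y u
  assume "star_of A s t \<sigma> x y = Some u"
  then have xy: "x \<in> A" "y \<in> A" "s y = s x" and u: "u = x \<star> y"
    by (auto simp: star_of_eq split: if_splits)
  then show "x \<in> A \<and> y \<in> A \<and> u \<in> A \<and> s x = s y"
    using star_mem(1)[OF xy] by simp
  show "\<exists>v. star_of A s t \<sigma> y x = Some v \<and> s u = t x \<and> s v = t y \<and> t u = t v"
    using xy u star_mem(2)[OF xy] star_mem(2)[OF xy(2,1)] target_star_swap[OF xy]
    by (simp add: star_of_eq)
next
  fix x y z u w r
  assume "star_of A s t \<sigma> x y = Some u \<and> star_of A s t \<sigma> x z = Some w
    \<and> star_of A s t \<sigma> u w = Some r"
  then have xyz: "x \<in> A" "y \<in> A" "z \<in> A" "s y = s x" "s z = s x"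
    and r: "r = (x \<star> y) \<star> (x \<star> z)"
    by (auto simp: star_of_eq split: if_splits)
  have "y \<star> x \<in> A" "y \<star> z \<in> A" "s (y \<star> x) = s (y \<star> z)"
    using star_mem[OF xyz(2,1)] star_mem[OF xyz(2,3)] xyz(4,5) by auto
  then show "\<exists>p q. star_of A s t \<sigma> y z = Some q \<and> star_of A s t \<sigma> y x = Some p
      \<and> star_of A s t \<sigma> p q = Some r"
    using xyz r star_RC_law[OF xyz] by (simp add: star_of_eq)
qed

end

theorem proposition5p1:
  fixes Lam :: "'v set" and A :: "'a set" and s t :: "'a \<Rightarrow> 'v"
    and \<sigma> :: "'a \<times> 'a \<Rightarrow> 'a \<times> 'a"
  assumes "quiver_YB_map Lam A s t \<sigma>"
    and "involutive_YB A s t \<sigma>"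
    and "left_nondeg_YB A s t \<sigma>"
  shows "weak_RC_system Lam A s t (star_of A s t \<sigma>)
    \<and> left_nondeg_RC A s t (star_of A s t \<sigma>)
    \<and> (\<forall>x\<in>A. \<forall>y\<in>A. s x = s y \<longrightarrow> star_of A s t \<sigma> x y \<noteq> None)"
proof -
  interpret involutive_left_nondeg_quiver_YB Lam A s t \<sigma>
    by unfold_locales (fact assms)+
  show ?thesis
    using weak_RC_system_star_of left_nondeg_RC_star_of by (simp add: star_of_eq)
qed

end
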